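(* Let $n,t,k$ be integers with $n\geq 2t\geq 2$ and $k\geq 2$. Then \[P_k(n,t)\leq P_k(t)\,A_k(n-2t,0^t),\] where $0^t$ denotes the word consisting of $t$ zeros.
   Context: Words are over $\Sigma_k=\{0,1,\ldots,k-1\}$. A border of a word $w$ is a non-empty word that is both a proper prefix and a proper suffix of $w$. A word $w$ is closed by a word $u$ if $u$ is a border of $w$ and $u$ occurs exactly twice in $w$ as a factor (overlapping occurrences counted). A word $w$ is privileged if $|w|\leq 1$ or if $w$ is closed by some privileged word. $P_k(m)$ denotes the number of privileged words of length $m$ over $\Sigma_k$, and $P_k(n,t)$ denotes the number of privileged words of length $n$ over $\Sigma_k$ that are closed by a privileged word of length $t$. $A_k(m,v)$ denotes the number of words of length $m$ over $\Sigma_k$ that do not contain $v$ as a factor (for $m=0$ the empty word is counted). *)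

theory Defs
  imports Main "HOL-Library.Sublist"
begin

definition words :: "nat \<Rightarrow> nat \<Rightarrow> nat list set" where
  "words k m = {w. length w = m \<and> set w \<subseteq> {..<k}}"

definition occ :: "nat list \<Rightarrow> nat list \<Rightarrow> nat" where
  "occ u w = card {i. i + length u \<le> length w \<and> take (length u) (drop i w) = u}"

definition is_border :: "nat list \<Rightarrow> nat list \<Rightarrow> bool" where
  "is_border u w \<longleftrightarrow> u \<noteq> [] \<and> strict_prefix u w \<and> strict_suffix u w"

definition closed_by :: "nat list \<Rightarrow> nat list \<Rightarrow> bool" where
  "closed_by w u \<longleftrightarrow> is_border u w \<and> occ u w = 2"

(* privileged words (inductive; well-founded since a border is strictly shorter) *)
inductive privileged :: "nat list \<Rightarrow> bool" where
  short: "length w \<le> 1 \<Longrightarrow> privileged w"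
| closed: "closed_by w u \<Longrightarrow> privileged u \<Longrightarrow> privileged w"

definition P :: "nat \<Rightarrow> nat \<Rightarrow> nat" where
  "P k m = card {w \<in> words k m. privileged w}"

definition P2 :: "nat \<Rightarrow> nat \<Rightarrow> nat \<Rightarrow> nat" where
  "P2 k n t = card {w \<in> words k n. privileged w \<and>
      (\<exists>u. length u = t \<and> privileged u \<and> closed_by w u)}"

definition A :: "nat \<Rightarrow> nat \<Rightarrow> nat list \<Rightarrow> nat" where
  "A k m v = card {w \<in> words k m. \<not> sublist v w}"

end

theory Submission
  imports Defs
begin

(* A word w of length n >= 2t closed by u of length t is u x u, and x cannot contain u, for
   otherwise u would occur three times in w.  Hence P_k(n,t) is at most the sum of A_k(n-2t,u)
   over the privileged u of length t, and it remains to show A_k(m,u) <= A_k(m,0^t).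
   Cutting a word of length m >= t that avoids u at the last position j where its final block
   of length t differs from u gives A_k(m,u) <= sum_{j<t} (k-1) A_k(m-t+j,u).  For u = 0^t the
   same construction is injective and produces only words avoiding 0^t, so 0^t satisfies the
   reverse inequality, and induction on m concludes. *)

lemma last_mismatch:
  assumes "length y = length u" and "y \<noteq> u"
  shows "\<exists>j<length u. y ! j \<noteq> u ! j \<and> drop (Suc j) y = drop (Suc j) u"
  using assms
proof (induction y u rule: list_induct2)
  case Nil
  then show ?case by simp
next
  case (Cons a y b u)
  show ?case
  proof (cases "y = u")
    case True
    with Cons.prems show ?thesis by auto
  next
    case False
    with Cons.IH obtain j where "j < length u" "y ! j \<noteq> u ! j" "drop (Suc j) y = drop (Suc j) u"
      by blast
    then show ?thesis by (intro exI[of _ "Suc j"]) auto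
  qed
qed

lemma sublist_append_Cons_notin:
  assumes "sublist xs (ys @ c # zs)" and "c \<notin> set xs"
  shows "sublist xs ys \<or> sublist xs zs"
  using assms
  by (auto simp: sublist_append sublist_Cons_right prefix_Cons Cons_eq_append_conv)

lemma append_Cons_replicate_eq_iff:
  fixes c d :: nat
  assumes "c \<noteq> 0" and "d \<noteq> 0"
  shows "xs @ c # replicate a 0 = ys @ d # replicate b 0 \<longleftrightarrow> a = b \<and> xs = ys \<and> c = d"
proof -
  have zeros: "takeWhile ((=) 0) (rev (zs @ e # replicate n 0)) = replicate n 0"
    if "e \<noteq> 0" for zs and e n :: nat
    using that by (simp, subst takeWhile_append2) auto
  show ?thesis
  proof
    assume eq: "xs @ c # replicate a 0 = ys @ d # replicate b 0"
    then have "replicate a 0 = (replicate b 0 :: nat list)"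
      using zeros[OF assms(1), of xs a] zeros[OF assms(2), of ys b] by metis
    with eq show "a = b \<and> xs = ys \<and> c = d"
      by simp
  qed simp
qed

lemma finite_words: "finite (words k m)"
proof -
  have "words k m = {xs. set xs \<subseteq> {..<k} \<and> length xs = m}"
    by (auto simp: words_def)
  then show ?thesis
    using finite_lists_length_eq[of "{..<k}" m] by simp
qed

definition avoiding :: "nat \<Rightarrow> nat \<Rightarrow> nat list \<Rightarrow> nat list set" where
  "avoiding k m u = {w \<in> words k m. \<not> sublist u w}"

lemma A_eq_card_avoiding: "A k m v = card (avoiding k m v)"
  by (simp add: A_def avoiding_def)

lemma finite_avoiding: "finite (avoiding k m u)"
  using finite_words[of k m] by (simp add: avoiding_def)

lemma avoiding_short: "m < length u \<Longrightarrow> avoiding k m u = words k m"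
  by (auto simp: avoiding_def words_def dest: sublist_length_le)

definition mismatch_word :: "nat list \<Rightarrow> nat \<times> nat list \<times> nat \<Rightarrow> nat list" where
  "mismatch_word u = (\<lambda>(j, x, c). x @ c # drop (Suc j) u)"

definition mismatch_data :: "nat \<Rightarrow> nat \<Rightarrow> nat list \<Rightarrow> (nat \<times> nat list \<times> nat) set" where
  "mismatch_data k m u =
     (SIGMA j:{..<length u}. avoiding k (m - length u + j) u \<times> ({..<k} - {u ! j}))"

lemma finite_mismatch_data: "finite (mismatch_data k m u)"
  by (simp add: mismatch_data_def finite_avoiding)

lemma card_mismatch_data:
  assumes "set u \<subseteq> {..<k}"
  shows "card (mismatch_data k m u) =
           (\<Sum>j<length u. (k - 1) * card (avoiding k (m - length u + j) u))"
proof -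
  have "card ({..<k} - {u ! j}) = k - 1" if "j < length u" for j
    using assms that nth_mem by fastforce
  then show ?thesis
    by (simp add: mismatch_data_def finite_avoiding card_cartesian_product mult.commute)
qed

lemma avoiding_subset_mismatch_words:
  assumes "length u \<le> m"
  shows "avoiding k m u \<subseteq> mismatch_word u ` mismatch_data k m u"
proof
  fix w assume "w \<in> avoiding k m u"
  then have lw: "length w = m" and sw: "set w \<subseteq> {..<k}" and nw: "\<not> sublist u w"
    by (auto simp: avoiding_def words_def)
  define i where "i = m - length u"
  define y where "y = drop i w"
  have w: "w = take i w @ y"
    by (simp add: y_def)
  have "y \<noteq> u"
    using nw w by (metis sublist_append_leftI)
  moreover have ly: "length y = length u"
    using lw assms by (simp add: y_def i_def)
  ultimately obtain j where j: "j < length u" "y ! j \<noteq> u ! j" "drop (Suc j) y = drop (Suc j) u"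
    using last_mismatch by blast
  define x where "x = take (i + j) w"
  have "y = take j y @ y ! j # drop (Suc j) u"
    using j(1,3) ly by (metis id_take_nth_drop)
  moreover have "x = take i w @ take j y"
    by (simp add: x_def y_def take_add)
  ultimately have "w = x @ y ! j # drop (Suc j) u"
    using w by (metis append.assoc)
  moreover have "x \<in> avoiding k (m - length u + j) u"
    using lw sw nw assms j(1) set_take_subset[of "i + j" w]
      sublist_order.order.trans[OF _ sublist_take[of "i + j" w]]
    by (auto simp: avoiding_def words_def x_def i_def)
  moreover have "y ! j \<in> set w"
    using ly j(1) by (metis in_set_dropD nth_mem y_def)
  then have "y ! j < k"
    using sw by auto
  ultimately show "w \<in> mismatch_word u ` mismatch_data k m u"
    using j by (auto simp: mismatch_word_def mismatch_data_def image_iff)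
qed

lemma mismatch_words_zeros_subset_avoiding:
  assumes "t \<le> m"
  shows "mismatch_word (replicate t 0) ` mismatch_data k m (replicate t 0)
           \<subseteq> avoiding k m (replicate t 0)"
proof clarify
  fix j x c
  assume "(j, x, c) \<in> mismatch_data k m (replicate t 0)"
  then have j: "j < t" and c: "c < k" "c \<noteq> 0" and x: "x \<in> avoiding k (m - t + j) (replicate t 0)"
    by (auto simp: mismatch_data_def)
  have w: "mismatch_word (replicate t 0) (j, x, c) = x @ c # replicate (t - Suc j) 0"
    by (simp add: mismatch_word_def)
  have "\<not> sublist (replicate t 0) (replicate (t - Suc j) 0)"
    using j by (auto dest: sublist_length_le)
  moreover have "\<not> sublist (replicate t 0) x" and "c \<notin> set (replicate t 0)"
    using x c(2) by (auto simp: avoiding_def)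
  ultimately have "\<not> sublist (replicate t 0) (x @ c # replicate (t - Suc j) 0)"
    using sublist_append_Cons_notin[of "replicate t 0" x c "replicate (t - Suc j) 0"] by blast
  then show "mismatch_word (replicate t 0) (j, x, c) \<in> avoiding k m (replicate t 0)"
    unfolding w using x c j assms by (auto simp: avoiding_def words_def)
qed

lemma inj_on_mismatch_word_zeros:
  "inj_on (mismatch_word (replicate t 0)) (mismatch_data k m (replicate t 0))"
  by (auto simp: inj_on_def mismatch_data_def mismatch_word_def append_Cons_replicate_eq_iff)

lemma card_avoiding_le_card_avoiding_zeros:
  assumes "set u \<subseteq> {..<k}"
  shows "card (avoiding k m u) \<le> card (avoiding k m (replicate (length u) 0))"
proof (induction m rule: less_induct)
  case (less m)
  let ?z = "replicate (length u) 0"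
  show ?case
  proof (cases "m < length u")
    case True
    then show ?thesis
      by (simp add: avoiding_short)
  next
    case False
    have "set ?z \<subseteq> {..<k}"
      using assms by (cases u) auto
    have "card (avoiding k m u) \<le> card (mismatch_data k m u)"
      by (rule surj_card_le[OF finite_mismatch_data avoiding_subset_mismatch_words]) (use False in simp)
    also have "\<dots> = (\<Sum>j<length u. (k - 1) * card (avoiding k (m - length u + j) u))"
      using assms by (rule card_mismatch_data)
    also have "\<dots> \<le> (\<Sum>j<length u. (k - 1) * card (avoiding k (m - length u + j) ?z))"
      using False by (intro sum_mono mult_le_mono2 less.IH) auto
    also have "\<dots> = card (mismatch_data k m ?z)"
      using card_mismatch_data[OF \<open>set ?z \<subseteq> {..<k}\<close>, of m] by simp
    also have "\<dots> \<le> card (avoiding k m ?z)"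
      using False
      by (intro card_inj_on_le[OF inj_on_mismatch_word_zeros] mismatch_words_zeros_subset_avoiding
          finite_avoiding) simp
    finally show ?thesis .
  qed
qed

lemma card_le_occ:
  assumes "\<And>i. i \<in> I \<Longrightarrow> i + length u \<le> length w \<and> take (length u) (drop i w) = u"
  shows "card I \<le> occ u w"
  unfolding occ_def
proof (rule card_mono)
  show "finite {i. i + length u \<le> length w \<and> take (length u) (drop i w) = u}"
    by (rule finite_subset[of _ "{..length w}"]) auto
qed (use assms in blast)

lemma three_le_occ:
  assumes "u \<noteq> []"
  shows "3 \<le> occ u (u @ p @ u @ q @ u)"
proof -
  let ?I = "{0, length u + length p, 2 * length u + length p + length q}"
  have "card ?I = 3"
    using assms by simp
  moreover have "card ?I \<le> occ u (u @ p @ u @ q @ u)"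
    by (rule card_le_occ) auto
  ultimately show ?thesis
    by simp
qed

lemma closed_byE:
  assumes "closed_by w u" and "2 * length u \<le> length w"
  obtains x where "w = u @ x @ u" and "\<not> sublist u x"
proof -
  have "u \<noteq> []" and "prefix u w" and "suffix u w" and occ: "occ u w = 2"
    using assms(1) by (auto simp: closed_by_def is_border_def strict_prefix_def strict_suffix_def)
  then obtain r where w: "w = u @ r" and "suffix u (u @ r)"
    by (auto simp: prefix_def)
  moreover have "length u \<le> length r"
    using w assms(2) by simp
  ultimately have "suffix u r"
    by (auto simp: suffix_append)
  then obtain x where r: "r = x @ u"
    by (auto simp: suffix_def)
  moreover have "\<not> sublist u x"
  proof
    assume "sublist u x"
    then obtain p q where "x = p @ u @ q"
      by (auto simp: sublist_def)
    then show False
      using three_le_occ[OF \<open>u \<noteq> []\<close>, of p q] occ w r by simp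
  qed
  ultimately show thesis
    using that w by simp
qed

theorem lemma15:
  fixes n t k :: nat
  assumes "n \<ge> 2 * t" and "2 * t \<ge> 2" and "k \<ge> 2"
  shows "P2 k n t \<le> P k t * A k (n - 2 * t) (replicate t 0)"
proof -
  define U where "U = {u \<in> words k t. privileged u}"
  define Q where "Q = {w \<in> words k n. privileged w \<and>
      (\<exists>u. length u = t \<and> privileged u \<and> closed_by w u)}"
  have "Q \<subseteq> (\<lambda>(u, x). u @ x @ u) ` (SIGMA u:U. avoiding k (n - 2 * t) u)"
  proof
    fix w assume "w \<in> Q"
    then obtain u where w: "w \<in> words k n" and u: "length u = t" "privileged u"
      and "closed_by w u"
      by (auto simp: Q_def)
    moreover have "2 * length u \<le> length w"
      using w u assms(1) by (simp add: words_def)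
    ultimately obtain x where wx: "w = u @ x @ u" and "\<not> sublist u x"
      by (auto elim: closed_byE)
    then have "u \<in> U" and "x \<in> avoiding k (n - 2 * t) u"
      using w u by (auto simp: U_def avoiding_def words_def)
    with wx show "w \<in> (\<lambda>(u, x). u @ x @ u) ` (SIGMA u:U. avoiding k (n - 2 * t) u)"
      by auto
  qed
  then have "P2 k n t \<le> card (SIGMA u:U. avoiding k (n - 2 * t) u)"
    unfolding P2_def Q_def[symmetric]
    by (rule surj_card_le[rotated]) (simp add: U_def finite_words finite_avoiding)
  also have "\<dots> = (\<Sum>u\<in>U. card (avoiding k (n - 2 * t) u))"
    by (simp add: U_def finite_words finite_avoiding)
  also have "\<dots> \<le> (\<Sum>u\<in>U. A k (n - 2 * t) (replicate t 0))"
    using card_avoiding_le_card_avoiding_zeros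
    by (intro sum_mono) (auto simp: U_def words_def A_eq_card_avoiding)
  also have "\<dots> = P k t * A k (n - 2 * t) (replicate t 0)"
    by (simp add: P_def U_def)
  finally show ?thesis .
qed

end
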